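(* Let $d\in\mathbb{N}$, and suppose that there exists $\tau^*>0$ such that $f\in\mathcal{F}_d$ is continuous on $\mathbb{R}^d$ and differentiable at every $x\in\mathbb{R}^d$ satisfying $f(x)<\tau^*$. Then for $\beta\geq1$, $\Lambda>0$ and any $\tau\leq\tau^*\det^{1/2}\Sigma_f$, we have $f\in\mathcal{F}^{(\beta,\Lambda,\tau)}$ if and only if \[ \|\nabla f(x)\|'_{\Sigma_f^{-1}}\leq\Lambda\{f(x)\det^{1/2}\Sigma_f\}^{1-1/\beta} \] for all $x\in\mathbb{R}^d$ with $f(x)<\tau\det^{-1/2}\Sigma_f$.
   Context: $\mathcal{F}_d$ is the class of upper semi-continuous log-concave densities on $\mathbb{R}^d$; $\Sigma_f$ is the covariance matrix of $f\in\mathcal{F}_d$. For a positive definite $S$, $\|x\|_S:=(x^\top S^{-1}x)^{1/2}$ and $\|w\|'_S:=(w^\top S^{-1}w)^{1/2}\det^{-1/2}S$ (so $\|w\|'_{\Sigma^{-1}}=(w^\top\Sigma w)^{1/2}\det^{1/2}\Sigma$). For $\beta\ge1$ and $\Lambda,\tau>0$, $\mathcal{F}^{(\beta,\Lambda,\tau)}$ is the set of $f\in\mathcal{F}_d$ that are continuous on $\mathbb{R}^d$ and satisfy $\|x-y\|_{\Sigma_f}\geq \dfrac{\{f(x)-f(y)\}\det^{1/2}\Sigma_f}{\Lambda\{f(x)\det^{1/2}\Sigma_f\}^{1-1/\beta}}$ whenever $f(y)<f(x)<\tau\det^{-1/2}\Sigma_f$. *)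

theory Defs
  imports "HOL-Analysis.Analysis"
begin

definition usc_on_UNIV :: "('a::topological_space \<Rightarrow> real) \<Rightarrow> bool" where
  "usc_on_UNIV f \<longleftrightarrow> (\<forall>x. \<forall>c. f x < c \<longrightarrow> (\<forall>\<^sub>F y in at x. f y < c))"

text \<open>Log-concavity: f is nonnegative and log f (with log 0 = -infinity) is concave.\<close>
definition log_concave :: "(real^'n \<Rightarrow> real) \<Rightarrow> bool" where
  "log_concave f \<longleftrightarrow> (\<forall>x. 0 \<le> f x) \<and>
     (\<forall>x y t. 0 < t \<and> t < 1 \<longrightarrow>
        f x powr (1 - t) * f y powr t \<le> f ((1 - t) *\<^sub>R x + t *\<^sub>R y))"

definition is_density :: "(real^'n \<Rightarrow> real) \<Rightarrow> bool" where
  "is_density f \<longleftrightarrow> (\<forall>x. 0 \<le> f x) \<and> (f has_integral 1) UNIV"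

definition F_d :: "(real^'n \<Rightarrow> real) set" where
  "F_d = {f. is_density f \<and> log_concave f \<and> usc_on_UNIV f}"

definition mean_vec :: "(real^'n \<Rightarrow> real) \<Rightarrow> real^'n" where
  "mean_vec f = (\<chi> i. integral UNIV (\<lambda>x. x $ i * f x))"

definition cov :: "(real^'n \<Rightarrow> real) \<Rightarrow> real^'n^'n" where
  "cov f = (\<chi> i j. integral UNIV
      (\<lambda>x. (x $ i - mean_vec f $ i) * (x $ j - mean_vec f $ j) * f x))"

definition normS :: "real^'n^'n \<Rightarrow> real^'n \<Rightarrow> real" where
  "normS S x = sqrt (x \<bullet> (matrix_inv S *v x))"

definition normS' :: "real^'n^'n \<Rightarrow> real^'n \<Rightarrow> real" where
  "normS' S w = sqrt (w \<bullet> (matrix_inv S *v w)) / sqrt (det S)"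

text \<open>Gradient of f at x (meaningful when f is differentiable at x).\<close>
definition grad :: "(real^'n \<Rightarrow> real) \<Rightarrow> real^'n \<Rightarrow> real^'n" where
  "grad f x = (\<chi> i. frechet_derivative f (at x) (axis i 1))"

definition F_class :: "real \<Rightarrow> real \<Rightarrow> real \<Rightarrow> (real^'n \<Rightarrow> real) set" where
  "F_class \<beta> \<Lambda> \<tau> = {f. f \<in> F_d \<and> continuous_on UNIV f \<and>
     (\<forall>x y. f y < f x \<and> f x < \<tau> / sqrt (det (cov f)) \<longrightarrow>
        normS (cov f) (x - y) \<ge>
          (f x - f y) * sqrt (det (cov f)) /
          (\<Lambda> * (f x * sqrt (det (cov f))) powr (1 - 1 / \<beta>)))}"

end

theory Submission
  imports Defs
begin

text \<open>First, \<open>\<Sigma>\<^sub>f\<close> is positive definite: a log-concave density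
  has convex superlevel sets, which have finite volume and (containing a ball) are therefore
  bounded, so log-concavity forces exponential decay and finite second moments; then
  \<open>v\<^sup>T \<Sigma>\<^sub>f v\<close> is the integral of \<open>(v \<bullet> (x - mean))\<^sup>2 f x\<close>. Second, for a positive definite
  \<open>S\<close> and a nondecreasing modulus \<open>\<rho>\<close>, the bound \<open>f x - f y \<le> \<rho> (f x) \<parallel>x - y\<parallel>\<^sub>S\<close> on
  sublevel sets is equivalent to \<open>(\<nabla>f\<^sup>T S \<nabla>f)\<^sup>1\<^sup>/\<^sup>2 \<le> \<rho> (f x)\<close>: one direction differentiates
  \<open>f\<close> at \<open>x\<close> along \<open>- S \<nabla>f x\<close>, the other applies the mean value theorem on the segment from
  \<open>y\<close> to the first point where \<open>f\<close> reaches \<open>f x\<close>, together with Cauchy--Schwarz for the dual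
  pair \<open>S\<close>, \<open>S\<^sup>-\<^sup>1\<close>. The class \<open>F\<^sup>(\<^sup>\<beta>\<^sup>,\<^sup>\<Lambda>\<^sup>,\<^sup>\<tau>\<^sup>)\<close> is exactly this bound for
  \<open>\<rho> s = \<Lambda> (s det\<^sup>1\<^sup>/\<^sup>2\<Sigma>)\<^sup>1\<^sup>-\<^sup>1\<^sup>/\<^sup>\<beta> / det\<^sup>1\<^sup>/\<^sup>2\<Sigma>\<close>.\<close>

section \<open>Inverse matrices and positive semidefinite quadratic forms\<close>

lemma matrix_inv_right:
  fixes A :: "'a::semiring_1^'n^'m"
  assumes "invertible A"
  shows "A ** matrix_inv A = mat 1"
  using someI_ex[OF assms[unfolded invertible_def]] by (simp add: matrix_inv_def)

lemma matrix_inv_left: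
  fixes A :: "'a::semiring_1^'n^'m"
  assumes "invertible A"
  shows "matrix_inv A ** A = mat 1"
  using someI_ex[OF assms[unfolded invertible_def]] by (simp add: matrix_inv_def)

lemma invertible_matrix_inv:
  fixes A :: "'a::semiring_1^'n^'m"
  shows "invertible A \<Longrightarrow> invertible (matrix_inv A)"
  using matrix_inv_left matrix_inv_right invertible_def by blast

lemma matrix_inv_matrix_inv:
  fixes A :: "'a::semiring_1^'n^'m"
  assumes "invertible A"
  shows "matrix_inv (matrix_inv A) = A"
proof -
  have "matrix_inv (matrix_inv A) = matrix_inv (matrix_inv A) ** (matrix_inv A ** A)"
    by (simp add: matrix_inv_left[OF assms] matrix_mul_rid)
  also have "\<dots> = A"
    by (simp add: matrix_mul_assoc matrix_inv_left[OF invertible_matrix_inv[OF assms]])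
  finally show ?thesis .
qed

lemma det_matrix_inv:
  fixes A :: "'a::field^'n^'n"
  assumes "invertible A"
  shows "det (matrix_inv A) = 1 / det A"
  using det_mul[of A "matrix_inv A"] invertible_det_nz[of A] assms
  by (simp add: matrix_inv_right field_simps)

lemma matrix_vector_mul_matrix_inv:
  fixes A :: "real^'n^'n"
  assumes "invertible A"
  shows "A *v (matrix_inv A *v w) = w"
  by (simp add: matrix_vector_mul_assoc matrix_inv_right[OF assms])

lemma inner_matrix_vector_symmetric:
  fixes A :: "real^'n^'n"
  assumes "transpose A = A"
  shows "x \<bullet> (A *v y) = y \<bullet> (A *v x)"
  by (metis assms dot_lmul_matrix inner_commute transpose_matrix_vector)

lemma quadratic_nonneg_imp_sq_le:
  fixes a b c :: real
  assumes "\<And>t. 0 \<le> a * t\<^sup>2 + 2 * b * t + c" and "0 \<le> a"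
  shows "b\<^sup>2 \<le> a * c"
proof (cases "a = 0")
  case True
  show ?thesis
  proof (cases "b = 0")
    case False
    have "0 \<le> a * (-(c + 1) / (2 * b))\<^sup>2 + 2 * b * (-(c + 1) / (2 * b)) + c" by (rule assms(1))
    with True False show ?thesis by (simp add: field_simps)
  qed (use True assms(1)[of 0] in simp)
next
  case False
  have "0 \<le> a * (-b / a)\<^sup>2 + 2 * b * (-b / a) + c" by (rule assms(1))
  with False assms(2) show ?thesis by (simp add: field_simps power2_eq_square)
qed

lemma psd_Cauchy_Schwarz:
  fixes A :: "real^'n^'n"
  assumes sym: "transpose A = A" and psd: "\<And>v. 0 \<le> v \<bullet> (A *v v)"
  shows "(x \<bullet> (A *v y))\<^sup>2 \<le> (x \<bullet> (A *v x)) * (y \<bullet> (A *v y))"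
proof -
  have "(x \<bullet> (A *v y))\<^sup>2 \<le> (y \<bullet> (A *v y)) * (x \<bullet> (A *v x))"
  proof (rule quadratic_nonneg_imp_sq_le)
    fix t :: real
    have "0 \<le> (x + t *\<^sub>R y) \<bullet> (A *v (x + t *\<^sub>R y))" by (rule psd)
    also have "\<dots> = (y \<bullet> (A *v y)) * t\<^sup>2 + 2 * (x \<bullet> (A *v y)) * t + x \<bullet> (A *v x)"
      using inner_matrix_vector_symmetric[OF sym, of y x]
      by (simp add: matrix_vector_right_distrib inner_add_left inner_add_right
            matrix_vector_mult_scaleR power2_eq_square algebra_simps)
    finally show "0 \<le> (y \<bullet> (A *v y)) * t\<^sup>2 + 2 * (x \<bullet> (A *v y)) * t + x \<bullet> (A *v x)" .
  qed (rule psd)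
  then show ?thesis by (simp add: mult.commute)
qed

lemma psd_matrix_inv:
  fixes S :: "real^'n^'n"
  assumes psd: "\<And>v. 0 \<le> v \<bullet> (S *v v)" and "invertible S"
  shows "0 \<le> w \<bullet> (matrix_inv S *v w)"
  using psd[of "matrix_inv S *v w"]
  by (simp add: matrix_vector_mul_matrix_inv[OF \<open>invertible S\<close>] inner_commute)

lemma abs_inner_le_psd_dual:
  fixes S :: "real^'n^'n"
  assumes sym: "transpose S = S" and psd: "\<And>v. 0 \<le> v \<bullet> (S *v v)" and inv: "invertible S"
  shows "\<bar>g \<bullet> w\<bar> \<le> sqrt (g \<bullet> (S *v g)) * sqrt (w \<bullet> (matrix_inv S *v w))"
proof -
  define y where "y = matrix_inv S *v w"
  have Sy: "S *v y = w" unfolding y_def by (rule matrix_vector_mul_matrix_inv[OF inv])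
  have "(g \<bullet> w)\<^sup>2 \<le> (g \<bullet> (S *v g)) * (w \<bullet> (matrix_inv S *v w))"
    using psd_Cauchy_Schwarz[OF sym psd, of g y] Sy by (simp add: y_def inner_commute)
  then show ?thesis
    by (metis real_sqrt_abs real_sqrt_le_mono real_sqrt_mult)
qed

lemma normS'_matrix_inv:
  fixes S :: "real^'n^'n"
  assumes "invertible S"
  shows "normS' (matrix_inv S) g = sqrt (g \<bullet> (S *v g)) * sqrt (det S)"
  unfolding normS'_def matrix_inv_matrix_inv[OF assms] det_matrix_inv[OF assms]
  by (simp add: real_sqrt_divide)

lemma normS_scaleR:
  fixes S :: "real^'n^'n"
  assumes "invertible S" "0 \<le> h"
  shows "normS S (h *\<^sub>R (S *v g)) = h * sqrt (g \<bullet> (S *v g))"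
  using assms
  by (simp add: normS_def matrix_vector_mult_scaleR matrix_vector_mul_assoc matrix_inv_left
      real_sqrt_mult power2_eq_square[symmetric] inner_commute)

section \<open>Second moments of log-concave densities\<close>

lemma nn_integral_affine_euclidean:
  fixes f :: "'a::euclidean_space \<Rightarrow> ennreal"
  assumes [measurable]: "f \<in> borel_measurable borel" and c: "c \<noteq> 0"
  shows "(\<integral>\<^sup>+x. f x \<partial>lborel) = ennreal (\<bar>c\<bar> ^ DIM('a)) * (\<integral>\<^sup>+x. f (t + c *\<^sub>R x) \<partial>lborel)"
  by (subst lborel_affine[OF c, of t])
     (simp add: nn_integral_density nn_integral_distr nn_integral_cmult)

lemma lborel_integrable_affine:
  fixes f :: "'a::euclidean_space \<Rightarrow> 'b::{banach, second_countable_topology}"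
  assumes f: "integrable lborel f" and "c \<noteq> 0"
  shows "integrable lborel (\<lambda>x. f (t + c *\<^sub>R x))"
  using f f[THEN borel_measurable_integrable] \<open>c \<noteq> 0\<close> unfolding integrable_iff_bounded
  by (subst (asm) nn_integral_affine_euclidean[where c=c and t=t])
     (auto simp: ennreal_mult_less_top)

lemma one_plus_sq_mult_exp_le:
  fixes a r :: real
  assumes a: "a > 0" and r: "r \<ge> 0"
  shows "(1 + r\<^sup>2) * exp (- a * r) \<le> max 1 (2 / a\<^sup>2)"
proof -
  define K where "K = max 1 (2 / a\<^sup>2)"
  have "1 + a\<^sup>2 * r\<^sup>2 / 2 \<le> 1 + a * r + (a * r)\<^sup>2 / 2"
    using a r by (simp add: power_mult_distrib)
  also have "\<dots> \<le> exp (a * r)"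
    using a r by (intro exp_lower_Taylor_quadratic) simp
  finally have e: "1 + a\<^sup>2 * r\<^sup>2 / 2 \<le> exp (a * r)" .
  have K: "1 \<le> K" "2 / a\<^sup>2 \<le> K"
    unfolding K_def by auto
  have "r\<^sup>2 = 2 / a\<^sup>2 * (a\<^sup>2 * r\<^sup>2 / 2)"
    using a by simp
  also have "\<dots> \<le> K * (a\<^sup>2 * r\<^sup>2 / 2)"
    using K by (intro mult_right_mono) auto
  finally have "1 + r\<^sup>2 \<le> K * (1 + a\<^sup>2 * r\<^sup>2 / 2)"
    using K by (simp add: distrib_left)
  also have "\<dots> \<le> K * exp (a * r)"
    using e K by (intro mult_left_mono) auto
  finally show ?thesis
    unfolding K_def by (simp add: exp_minus field_simps)
qed

lemma superlevel_disjoint_balls_bound: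
  fixes f :: "'a::euclidean_space \<Rightarrow> real" and c :: "nat \<Rightarrow> 'a"
  assumes int: "(f has_integral 1) UNIV" and nonneg: "\<And>x. 0 \<le> f x" and "r > 0"
    and above: "\<And>k x. k < N \<Longrightarrow> x \<in> ball (c k) r \<Longrightarrow> t \<le> f x"
    and apart: "\<And>k j. k < N \<Longrightarrow> j < N \<Longrightarrow> k \<noteq> j \<Longrightarrow> 2 * r \<le> dist (c k) (c j)"
  shows "real N * t * measure lborel (ball (0::'a) r) \<le> 1"
proof -
  define h where "h x = (\<Sum>k<N. t * indicator (ball (c k) r) x)" for x
  have "measure lebesgue (ball (c k) r) = measure lborel (ball (0::'a) r)" for k
    using content_ball_conv_unit_ball[of r "c k"] content_ball_conv_unit_ball[of r "0::'a"] \<open>r > 0\<close>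
    by simp
  then have "(indicator (ball (c k) r) has_integral measure lborel (ball (0::'a) r)) UNIV" for k
    using lmeasurable_iff_has_integral[THEN iffD1, OF lmeasurable_ball[of "c k" r]] by simp
  then have "(h has_integral (\<Sum>k<N. t * measure lborel (ball (0::'a) r))) UNIV"
    unfolding h_def by (intro has_integral_sum has_integral_mult_right) auto
  moreover have "h x \<le> f x" for x
  proof (cases "\<exists>k<N. x \<in> ball (c k) r")
    case True
    then obtain k where k: "k < N" "x \<in> ball (c k) r" by blast
    have "x \<notin> ball (c j) r" if "j < N" "j \<noteq> k" for j
      using apart[OF k(1) that(1)] that(2) k(2) dist_triangle_less_add[of "c k" x r "c j" r]
      by (auto simp: dist_commute)
    then have "h x = (\<Sum>j<N. if j = k then t else 0)"
      unfolding h_def using k by (intro sum.cong) auto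
    then show ?thesis
      using above[OF k] k(1) by simp
  next
    case False
    then show ?thesis
      using nonneg[of x] by (simp add: h_def)
  qed
  ultimately have "(\<Sum>k<N. t * measure lborel (ball (0::'a) r)) \<le> 1"
    using has_integral_le[OF _ int] by blast
  then show ?thesis by simp
qed

lemma convex_ball_shrink_subset:
  fixes x z :: "'a::real_normed_vector"
  assumes "convex C" and "ball z \<delta> \<subseteq> C" and "x \<in> C" and "0 < \<mu>" and "\<mu> \<le> 1"
  shows "ball ((1 - \<mu>) *\<^sub>R x + \<mu> *\<^sub>R z) (\<mu> * \<delta>) \<subseteq> C"
proof
  fix p assume p: "p \<in> ball ((1 - \<mu>) *\<^sub>R x + \<mu> *\<^sub>R z) (\<mu> * \<delta>)"
  define w where "w = z + (1 / \<mu>) *\<^sub>R (p - ((1 - \<mu>) *\<^sub>R x + \<mu> *\<^sub>R z))"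
  have "dist z w = dist ((1 - \<mu>) *\<^sub>R x + \<mu> *\<^sub>R z) p / \<mu>"
    unfolding w_def dist_norm using \<open>0 < \<mu>\<close> by (simp add: norm_minus_commute)
  also have "\<dots> < \<delta>"
    using p \<open>0 < \<mu>\<close> by (simp add: divide_less_eq mult.commute)
  finally have "w \<in> C"
    using \<open>ball z \<delta> \<subseteq> C\<close> by auto
  moreover have "p = (1 - \<mu>) *\<^sub>R x + \<mu> *\<^sub>R w"
    unfolding w_def using \<open>0 < \<mu>\<close> by (simp add: algebra_simps)
  ultimately show "p \<in> C"
    using convexD[OF \<open>convex C\<close> \<open>x \<in> C\<close>, of w "1 - \<mu>" \<mu>] \<open>0 < \<mu>\<close> \<open>\<mu> \<le> 1\<close> by simp
qed

text \<open>Between \<open>z\<close> and a point \<open>x\<close> of \<open>C\<close> at distance \<open>D\<close>, the convex set \<open>C\<close> contains about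
  \<open>D / \<delta>\<close> disjoint balls of radius \<open>\<delta>/2\<close>, each of \<open>f\<close>-mass at least \<open>t\<close> times its volume.\<close>
lemma convex_superlevel_bounded:
  fixes f :: "'a::euclidean_space \<Rightarrow> real"
  assumes int: "(f has_integral 1) UNIV" and nonneg: "\<And>x. 0 \<le> f x"
    and "convex C" and "ball z \<delta> \<subseteq> C" and "0 < \<delta>" and "0 < t"
    and above: "\<And>x. x \<in> C \<Longrightarrow> t \<le> f x"
  shows "bounded C"
proof -
  define V where "V = measure lborel (ball (0::'a) (\<delta>/2))"
  have "V > 0"
    unfolding V_def using content_ball_pos[of "\<delta>/2" "0::'a"] \<open>0 < \<delta>\<close> by simp
  define N where "N = nat \<lceil>2 / (t * V)\<rceil>"
  have "2 / (t * V) \<le> real N"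
    unfolding N_def by linarith
  then have NtV: "2 \<le> real N * t * V"
    using \<open>0 < t\<close> \<open>V > 0\<close> by (simp add: divide_le_eq mult.commute mult.left_commute)
  have "norm (x - z) \<le> 2 * real N * \<delta>" if "x \<in> C" for x
  proof (rule ccontr)
    define D where "D = norm (x - z)"
    assume "\<not> norm (x - z) \<le> 2 * real N * \<delta>"
    then have far: "2 * real N * \<delta> < D"
      unfolding D_def by simp
    moreover have "0 \<le> 2 * real N * \<delta>"
      using \<open>0 < \<delta>\<close> by simp
    ultimately have "0 < D" by linarith
    define \<mu> where "\<mu> k = 1 - real k * \<delta> / D" for k :: nat
    define c where "c k = (1 - \<mu> k) *\<^sub>R x + \<mu> k *\<^sub>R z" for k
    have "real N * t * V \<le> 1"
      unfolding V_def
    proof (rule superlevel_disjoint_balls_bound[OF int nonneg])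
      fix k p assume "k < N" and p: "p \<in> ball (c k) (\<delta>/2)"
      have "real k * \<delta> \<le> real N * \<delta>"
        using \<open>k < N\<close> \<open>0 < \<delta>\<close> by (intro mult_right_mono) auto
      then have "real k * \<delta> * 2 < D"
        using far by linarith
      then have "1/2 < \<mu> k" "\<mu> k \<le> 1"
        using \<open>0 < D\<close> \<open>0 < \<delta>\<close> unfolding \<mu>_def by (auto simp: divide_less_eq)
      moreover from this have "1/2 * \<delta> < \<mu> k * \<delta>"
        using \<open>0 < \<delta>\<close> by (intro mult_strict_right_mono) auto
      then have "p \<in> ball (c k) (\<mu> k * \<delta>)"
        using p by simp
      ultimately have "p \<in> C"
        using convex_ball_shrink_subset[OF \<open>convex C\<close> \<open>ball z \<delta> \<subseteq> C\<close> \<open>x \<in> C\<close>, of "\<mu> k"]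
        unfolding c_def by auto
      then show "t \<le> f p" by (rule above)
    next
      fix k j assume "k < N" "j < N" "k \<noteq> j"
      have "c k - c j = ((real k - real j) * \<delta> / D) *\<^sub>R (x - z)"
        unfolding c_def \<mu>_def by (simp add: algebra_simps diff_divide_distrib)
      then have "dist (c k) (c j) = \<bar>real k - real j\<bar> * \<delta>"
        using \<open>0 < D\<close> \<open>0 < \<delta>\<close> unfolding dist_norm D_def by (simp add: abs_mult)
      also have "\<dots> \<ge> 1 * \<delta>"
        using \<open>k \<noteq> j\<close> \<open>0 < \<delta>\<close> by (intro mult_right_mono) auto
      finally show "2 * (\<delta> / 2) \<le> dist (c k) (c j)" by simp
    qed (use \<open>0 < \<delta>\<close> in simp)
    with NtV show False by simp
  qed
  then have "C \<subseteq> cball z (2 * real N * \<delta>)"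
    by (auto simp: dist_norm norm_minus_commute)
  then show ?thesis
    using bounded_cball bounded_subset by blast
qed

lemma log_concave_superlevel_convex:
  fixes f :: "'a::real_vector \<Rightarrow> real"
  assumes lc: "\<And>x y s. 0 < s \<Longrightarrow> s < 1 \<Longrightarrow> f x powr (1 - s) * f y powr s \<le> f ((1 - s) *\<^sub>R x + s *\<^sub>R y)"
    and "0 < t"
  shows "convex {x. t \<le> f x}"
  unfolding convex_alt
proof (intro ballI allI impI)
  fix x y and u :: real assume x: "x \<in> {x. t \<le> f x}" and y: "y \<in> {x. t \<le> f x}" and u: "0 \<le> u \<and> u \<le> 1"
  show "(1 - u) *\<^sub>R x + u *\<^sub>R y \<in> {x. t \<le> f x}"
  proof (cases "u = 0 \<or> u = 1")
    case False
    then have "0 < u" "u < 1"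
      using u by auto
    have "t = t powr (1 - u) * t powr u"
      using \<open>0 < t\<close> by (simp flip: powr_add)
    also have "\<dots> \<le> f x powr (1 - u) * f y powr u"
      using x y \<open>0 < t\<close> \<open>0 < u\<close> \<open>u < 1\<close> by (intro mult_mono powr_mono2) auto
    also have "\<dots> \<le> f ((1 - u) *\<^sub>R x + u *\<^sub>R y)"
      by (rule lc[OF \<open>0 < u\<close> \<open>u < 1\<close>])
    finally show ?thesis by simp
  qed (use x y in auto)
qed

text \<open>On the segment from \<open>z\<close> to \<open>x\<close>, the point at distance \<open>\<rho>\<close> from \<open>z\<close> is
  \<open>(1 - s) z + s x\<close> with \<open>s = \<rho> / norm (x - z)\<close>, so \<open>f z\<^sup>1\<^sup>-\<^sup>s f x\<^sup>s < f z / 2\<close>, i.e.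
  \<open>f x < f z / 2 powr (1 / s)\<close>.\<close>
lemma log_concave_halving_decay:
  fixes f :: "'a::real_normed_vector \<Rightarrow> real"
  assumes nonneg: "\<And>x. 0 \<le> f x"
    and lc: "\<And>x y s. 0 < s \<Longrightarrow> s < 1 \<Longrightarrow> f x powr (1 - s) * f y powr s \<le> f ((1 - s) *\<^sub>R x + s *\<^sub>R y)"
    and "0 < f z" and "0 < \<rho>" and sphere: "\<And>y. norm (y - z) = \<rho> \<Longrightarrow> f y < f z / 2"
    and "\<rho> < norm (x - z)"
  shows "f x \<le> f z * exp (- (ln 2 / \<rho>) * norm (x - z))"
proof -
  define M where "M = f z"
  define D where "D = norm (x - z)"
  define s where "s = \<rho> / D"
  have "\<rho> < D" "0 < M"
    unfolding D_def M_def using assms by auto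
  then have s: "0 < s" "s < 1"
    unfolding s_def using \<open>0 < \<rho>\<close> by auto
  have "((1 - s) *\<^sub>R z + s *\<^sub>R x) - z = s *\<^sub>R (x - z)"
    by (simp add: algebra_simps)
  then have "norm (((1 - s) *\<^sub>R z + s *\<^sub>R x) - z) = \<rho>"
    using \<open>\<rho> < D\<close> \<open>0 < \<rho>\<close> unfolding s_def D_def by (auto simp: abs_of_pos)
  then have "f ((1 - s) *\<^sub>R z + s *\<^sub>R x) < M / 2"
    unfolding M_def by (rule sphere)
  with lc[OF s, of z x] have "M powr (1 - s) * f x powr s < M / 2"
    unfolding M_def by linarith
  also have "M / 2 = M powr (1 - s) * (M powr s / 2)"
    using \<open>0 < M\<close> by (simp flip: powr_add)
  finally have "f x powr s < M powr s / 2"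
    using \<open>0 < M\<close> by simp
  show ?thesis
  proof (cases "f x = 0")
    case False
    with nonneg[of x] have "0 < f x" by simp
    have "f x = (f x powr s) powr (1 / s)"
      using s \<open>0 < f x\<close> by (simp add: powr_powr)
    also have "\<dots> < (M powr s / 2) powr (1 / s)"
      using \<open>f x powr s < M powr s / 2\<close> s \<open>0 < f x\<close> by (intro powr_less_mono2) auto
    also have "\<dots> = M / 2 powr (1 / s)"
      using s \<open>0 < M\<close> by (simp add: powr_divide powr_powr)
    also have "\<dots> = M * exp (- (ln 2 / \<rho>) * D)"
      using \<open>0 < \<rho>\<close> \<open>\<rho> < D\<close> unfolding s_def powr_def by (simp add: exp_minus field_simps)
    finally show ?thesis
      unfolding M_def D_def by simp
  qed (use \<open>0 < M\<close> in \<open>simp add: M_def\<close>)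
qed

lemma exponential_bound_of_decay:
  fixes f :: "'a::euclidean_space \<Rightarrow> real"
  assumes cont: "continuous_on UNIV f" and "0 \<le> M" and "0 \<le> c" and "0 \<le> \<rho>"
    and decay: "\<And>x. \<rho> < norm (x - z) \<Longrightarrow> f x \<le> M * exp (- c * norm (x - z))"
  obtains B where "\<And>x. f x \<le> B * exp (- c * norm (x - z))"
proof -
  have "bounded (f ` cball z \<rho>)"
    using compact_continuous_image[OF continuous_on_subset[OF cont] compact_cball] by (auto intro: compact_imp_bounded)
  then obtain K where "\<forall>y \<in> f ` cball z \<rho>. \<bar>y\<bar> \<le> K"
    unfolding bounded_real by blast
  then have K: "f x \<le> K" if "x \<in> cball z \<rho>" for x
    using that by (auto dest: abs_le_D1)
  define B where "B = max M K * exp (c * \<rho>)"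
  have "f x \<le> B * exp (- c * norm (x - z))" for x
  proof (cases "\<rho> < norm (x - z)")
    case True
    have "M * 1 \<le> max M K * exp (c * \<rho>)"
      using \<open>0 \<le> M\<close> \<open>0 \<le> c\<close> \<open>0 \<le> \<rho>\<close> by (intro mult_mono) auto
    then have "M * exp (- c * norm (x - z)) \<le> B * exp (- c * norm (x - z))"
      unfolding B_def by (intro mult_right_mono) auto
    with decay[OF True] show ?thesis by linarith
  next
    case False
    then have "0 \<le> c * (\<rho> - norm (x - z))"
      using \<open>0 \<le> c\<close> by simp
    then have "1 \<le> exp (c * \<rho>) * exp (- c * norm (x - z))"
      by (simp add: algebra_simps flip: exp_add)
    then have "max M K * 1 \<le> max M K * (exp (c * \<rho>) * exp (- c * norm (x - z)))"
      using \<open>0 \<le> M\<close> by (intro mult_left_mono) auto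
    then have "max M K \<le> B * exp (- c * norm (x - z))"
      unfolding B_def by (simp add: mult.assoc)
    moreover have "f x \<le> K"
      using K[of x] False by (auto simp: dist_norm norm_minus_commute)
    ultimately show ?thesis by linarith
  qed
  with that show ?thesis by blast
qed

text \<open>The superlevel set \<open>{f \<ge> f z / 2}\<close> is convex and contains a ball around \<open>z\<close>, hence is
  bounded; outside it log-concavity halves \<open>f\<close> every further distance \<open>\<rho>\<close>.\<close>
lemma log_concave_exponential_tail:
  fixes f :: "'a::euclidean_space \<Rightarrow> real"
  assumes int: "(f has_integral 1) UNIV" and nonneg: "\<And>x. 0 \<le> f x"
    and cont: "continuous_on UNIV f"
    and lc: "\<And>x y s. 0 < s \<Longrightarrow> s < 1 \<Longrightarrow> f x powr (1 - s) * f y powr s \<le> f ((1 - s) *\<^sub>R x + s *\<^sub>R y)"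
    and "0 < f z"
  obtains B c where "0 < c" "\<And>x. f x \<le> B * exp (- c * norm (x - z))"
proof -
  define C where "C = {x. f z / 2 \<le> f x}"
  have "open {x. f z / 2 < f x}"
    using cont by (intro open_Collect_less continuous_on_const)
  moreover have "z \<in> {x. f z / 2 < f x}"
    using \<open>0 < f z\<close> by simp
  ultimately obtain \<delta> where "0 < \<delta>" "ball z \<delta> \<subseteq> {x. f z / 2 < f x}"
    using open_contains_ball by blast
  then have "ball z \<delta> \<subseteq> C"
    unfolding C_def by auto
  moreover have "convex C"
    unfolding C_def by (rule log_concave_superlevel_convex) (use lc \<open>0 < f z\<close> in auto)
  ultimately have "bounded C"
    using \<open>0 < \<delta>\<close> \<open>0 < f z\<close>
    by (intro convex_superlevel_bounded[OF int nonneg, of C z \<delta> "f z / 2"]) (auto simp: C_def)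
  then obtain \<rho> where "0 < \<rho>" and "C \<subseteq> ball z \<rho>"
    using bounded_subset_ballD by blast
  have sphere: "f y < f z / 2" if "norm (y - z) = \<rho>" for y
  proof -
    have "y \<notin> C"
      using \<open>C \<subseteq> ball z \<rho>\<close> that by (auto simp: dist_norm norm_minus_commute)
    then show ?thesis
      unfolding C_def by simp
  qed
  have decay: "f x \<le> f z * exp (- (ln 2 / \<rho>) * norm (x - z))" if "\<rho> < norm (x - z)" for x
    by (rule log_concave_halving_decay[OF nonneg lc \<open>0 < f z\<close> \<open>0 < \<rho>\<close> sphere that])
  obtain B where "\<And>x. f x \<le> B * exp (- (ln 2 / \<rho>) * norm (x - z))"
    by (rule exponential_bound_of_decay[OF cont _ _ _ decay]) (use \<open>0 < f z\<close> \<open>0 < \<rho>\<close> in auto)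
  moreover have "0 < ln 2 / \<rho>"
    using \<open>0 < \<rho>\<close> by simp
  ultimately show ?thesis
    using that by blast
qed

lemma exp_tail_sqrt_moment_bounded:
  fixes f :: "'a::real_normed_vector \<Rightarrow> real"
  assumes "0 < c" and "0 \<le> B" and tail: "\<And>x. f x \<le> B * exp (- c * norm (x - z))"
  obtains K where "\<And>x. (1 + norm x ^ 2) * sqrt (f x) \<le> K"
proof
  define a where "a = c / 2"
  have "0 < a"
    unfolding a_def using \<open>0 < c\<close> by simp
  fix x
  have "a * norm x \<le> a * (norm z + norm (x - z))"
    using \<open>0 < a\<close> norm_triangle_ineq2[of x z] by (intro mult_left_mono) auto
  then have "exp (- a * norm (x - z)) \<le> exp (- a * norm x) * exp (a * norm z)"
    by (simp add: algebra_simps flip: exp_add)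
  then have "sqrt (B * exp (- c * norm (x - z))) \<le> exp (- a * norm x) * (sqrt B * exp (a * norm z))"
    using \<open>0 \<le> B\<close> unfolding a_def
    by (simp add: real_sqrt_mult powr_def mult_left_mono mult.left_commute flip: powr_half_sqrt)
  then have "sqrt (f x) \<le> exp (- a * norm x) * (sqrt B * exp (a * norm z))"
    using real_sqrt_le_mono[OF tail[of x]] by linarith
  then have "(1 + norm x ^ 2) * sqrt (f x) \<le> ((1 + norm x ^ 2) * exp (- a * norm x)) * (sqrt B * exp (a * norm z))"
    by (simp add: mult_left_mono mult.assoc)
  also have "\<dots> \<le> max 1 (2 / a\<^sup>2) * (sqrt B * exp (a * norm z))"
    using \<open>0 \<le> B\<close> by (intro mult_right_mono one_plus_sq_mult_exp_le \<open>0 < a\<close>) auto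
  finally show "(1 + norm x ^ 2) * sqrt (f x) \<le> max 1 (2 / (c / 2)\<^sup>2) * (sqrt B * exp (c / 2 * norm z))"
    unfolding a_def .
qed

text \<open>Domination by the rescaled copy \<open>g\<close> of \<open>f\<close> avoids integrating \<open>exp (- c * norm x)\<close>
  over the whole space: by log-concavity \<open>sqrt (f x * f z) \<le> g x\<close>, and the tail bound makes
  \<open>(1 + norm x ^ 2) * sqrt (f x)\<close> bounded.\<close>
lemma log_concave_second_moment:
  fixes f :: "'a::euclidean_space \<Rightarrow> real"
  assumes int: "(f has_integral 1) UNIV" and nonneg: "\<And>x. 0 \<le> f x"
    and cont: "continuous_on UNIV f"
    and lc: "\<And>x y s. 0 < s \<Longrightarrow> s < 1 \<Longrightarrow> f x powr (1 - s) * f y powr s \<le> f ((1 - s) *\<^sub>R x + s *\<^sub>R y)"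
  shows "integrable lborel (\<lambda>x. (1 + norm x ^ 2) * f x)"
proof -
  have meas: "f \<in> borel_measurable borel"
    by (rule borel_measurable_continuous_onI[OF cont])
  obtain z where "0 < f z"
    using int nonneg has_integral_0_eq[of 1 UNIV] by (metis less_eq_real_def zero_neq_one ext)
  then obtain B c where "0 < c" and tail: "\<And>x. f x \<le> B * exp (- c * norm (x - z))"
    using log_concave_exponential_tail[OF int nonneg cont lc] by blast
  moreover have "0 \<le> B"
    using tail[of z] \<open>0 < f z\<close> by (smt (verit) exp_gt_zero mult_nonpos_nonneg)
  ultimately obtain K where K: "\<And>x. (1 + norm x ^ 2) * sqrt (f x) \<le> K"
    using exp_tail_sqrt_moment_bounded by blast
  define g where "g x = f ((1/2) *\<^sub>R z + (1/2) *\<^sub>R x)" for x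
  have "integrable lborel f"
    using meas nonneg nn_integral_has_integral_lborel[OF meas nonneg int]
    by (intro integrableI_nonneg) auto
  then have dominant: "integrable lborel (\<lambda>x. K / sqrt (f z) * g x)"
    unfolding g_def by (intro integrable_mult_right lborel_integrable_affine) auto
  have bound: "(1 + norm x ^ 2) * f x \<le> K / sqrt (f z) * g x" for x
  proof -
    have "sqrt (f x) * sqrt (f z) \<le> g x"
      using lc[of "1/2" x z] nonneg[of x] nonneg[of z]
      by (simp add: g_def powr_half_sqrt add.commute)
    then have "sqrt (f x) \<le> g x / sqrt (f z)"
      using \<open>0 < f z\<close> by (simp add: le_divide_eq)
    moreover have "0 \<le> K"
      using K[of x] nonneg[of x] by (smt (verit) mult_nonneg_nonneg real_sqrt_ge_zero zero_le_power2)
    ultimately have "((1 + norm x ^ 2) * sqrt (f x)) * sqrt (f x) \<le> K * (g x / sqrt (f z))"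
      using K[of x] nonneg[of x] by (intro mult_mono) auto
    then show ?thesis
      using nonneg[of x] by (simp add: mult.assoc)
  qed
  have "norm ((1 + norm x ^ 2) * f x) \<le> norm (K / sqrt (f z) * g x)" for x
    using bound[of x] abs_ge_self[of "K / sqrt (f z) * g x"] nonneg[of x] by simp
  moreover have "(\<lambda>x. (1 + norm x ^ 2) * f x) \<in> borel_measurable lborel"
    using meas by measurable
  ultimately show ?thesis
    by (intro Bochner_Integration.integrable_bound[OF dominant] AE_I2)
qed

lemma cov_symmetric: "transpose (cov f) = cov f"
  unfolding cov_def transpose_def by (simp add: mult.commute mult.left_commute)

lemma cov_integrand_integrable:
  fixes f :: "real^'n \<Rightarrow> real"
  assumes meas: "f \<in> borel_measurable borel" and nonneg: "\<And>x. 0 \<le> f x"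
    and moment: "integrable lborel (\<lambda>x. (1 + norm x ^ 2) * f x)"
  shows "(\<lambda>x. (x $ i - m $ i) * (x $ j - m $ j) * f x) integrable_on UNIV"
proof -
  define K where "K = 2 + 2 * (norm m)\<^sup>2"
  have "norm ((x $ i - m $ i) * (x $ j - m $ j) * f x) \<le> norm (K * ((1 + norm x ^ 2) * f x))" for x
  proof -
    have "\<bar>x $ k - m $ k\<bar> \<le> norm x + norm m" for k
      using component_le_norm_cart[of x k] component_le_norm_cart[of m k] by linarith
    then have "\<bar>(x $ i - m $ i) * (x $ j - m $ j)\<bar> \<le> (norm x + norm m)\<^sup>2"
      unfolding abs_mult power2_eq_square by (intro mult_mono) auto
    also have "\<dots> \<le> K * (1 + norm x ^ 2)"
      unfolding K_def using sum_squares_bound[of "norm x" "norm m"]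
      by (simp add: power2_sum algebra_simps)
        (smt (verit) mult_nonneg_nonneg zero_le_power2)
    finally have "\<bar>(x $ i - m $ i) * (x $ j - m $ j)\<bar> * f x \<le> K * (1 + norm x ^ 2) * f x"
      using nonneg[of x] by (rule mult_right_mono)
    then show ?thesis
      using nonneg[of x] by (simp add: abs_mult mult.assoc K_def)
  qed
  moreover have "(\<lambda>x. (x $ i - m $ i) * (x $ j - m $ j) * f x) \<in> borel_measurable lborel"
    using meas by measurable
  ultimately have "integrable lborel (\<lambda>x. (x $ i - m $ i) * (x $ j - m $ j) * f x)"
    by (intro Bochner_Integration.integrable_bound[OF integrable_mult_right[OF moment, of K]] AE_I2)
  then show ?thesis
    by (rule integrable_on_lborel)
qed

lemma cov_psd:
  fixes f :: "real^'n \<Rightarrow> real"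
  assumes meas: "f \<in> borel_measurable borel" and nonneg: "\<And>x. 0 \<le> f x"
    and moment: "integrable lborel (\<lambda>x. (1 + norm x ^ 2) * f x)"
  shows "0 \<le> v \<bullet> (cov f *v v)"
proof -
  define m where "m = mean_vec f"
  define h where "h i j = (\<lambda>x. (x $ i - m $ i) * (x $ j - m $ j) * f x)" for i j
  have h_int: "h i j integrable_on UNIV" for i j
    unfolding h_def by (rule cov_integrand_integrable[OF meas nonneg moment])
  have vh_int: "(\<lambda>x. v $ i * v $ j * h i j x) integrable_on UNIV" for i j
    using integrable_on_cmult_left[OF h_int, of "v $ i * v $ j"] by simp
  have "v \<bullet> (cov f *v v) = (\<Sum>i\<in>UNIV. \<Sum>j\<in>UNIV. v $ i * v $ j * cov f $ i $ j)"
    by (simp add: inner_vec_def matrix_vector_mult_def sum_distrib_left algebra_simps)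
  also have "\<dots> = (\<Sum>i\<in>UNIV. \<Sum>j\<in>UNIV. integral UNIV (\<lambda>x. v $ i * v $ j * h i j x))"
    by (simp add: integral_mult[OF h_int] cov_def h_def m_def)
  also have "\<dots> = (\<Sum>i\<in>UNIV. integral UNIV (\<lambda>x. \<Sum>j\<in>UNIV. v $ i * v $ j * h i j x))"
    by (intro sum.cong refl integral_sum[symmetric]) (auto intro: vh_int)
  also have "\<dots> = integral UNIV (\<lambda>x. \<Sum>i\<in>UNIV. \<Sum>j\<in>UNIV. v $ i * v $ j * h i j x)"
    by (intro integral_sum[symmetric]) (auto intro!: integrable_sum vh_int)
  also have "\<dots> \<ge> 0"
  proof (rule integral_nonneg)
    show "(\<lambda>x. \<Sum>i\<in>UNIV. \<Sum>j\<in>UNIV. v $ i * v $ j * h i j x) integrable_on UNIV"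
      by (auto intro!: integrable_sum vh_int)
    fix x
    have "(\<Sum>i\<in>UNIV. \<Sum>j\<in>UNIV. v $ i * v $ j * h i j x)
        = (\<Sum>i\<in>UNIV. \<Sum>j\<in>UNIV. (v $ i * (x $ i - m $ i)) * (v $ j * (x $ j - m $ j)) * f x)"
      unfolding h_def by (intro sum.cong refl) (simp add: algebra_simps)
    also have "\<dots> = (\<Sum>i\<in>UNIV. \<Sum>j\<in>UNIV. (v $ i * (x $ i - m $ i)) * (v $ j * (x $ j - m $ j))) * f x"
      by (simp only: sum_distrib_right)
    also have "\<dots> = (\<Sum>i\<in>UNIV. v $ i * (x $ i - m $ i))\<^sup>2 * f x"
      by (simp only: power2_eq_square sum_product)
    finally show "0 \<le> (\<Sum>i\<in>UNIV. \<Sum>j\<in>UNIV. v $ i * v $ j * h i j x)"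
      using nonneg[of x] by simp
  qed
  finally show ?thesis .
qed

lemma F_d_cov_psd:
  assumes "f \<in> F_d" and cont: "continuous_on UNIV f"
  shows "0 \<le> v \<bullet> (cov f *v v)"
proof -
  have nonneg: "\<And>x. 0 \<le> f x" and int: "(f has_integral 1) UNIV"
    and lc: "\<And>x y s. 0 < s \<Longrightarrow> s < 1 \<Longrightarrow> f x powr (1 - s) * f y powr s \<le> f ((1 - s) *\<^sub>R x + s *\<^sub>R y)"
    using \<open>f \<in> F_d\<close> by (auto simp: F_d_def is_density_def log_concave_def)
  show ?thesis
    using borel_measurable_continuous_onI[OF cont] nonneg log_concave_second_moment[OF int nonneg cont lc]
    by (rule cov_psd)
qed

section \<open>Gradient bounds and level-drop bounds\<close>

lemma has_real_derivative_along_line: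
  fixes f :: "'a::real_normed_vector \<Rightarrow> real"
  assumes "(f has_derivative f') (at (y + s *\<^sub>R w))"
  shows "((\<lambda>s. f (y + s *\<^sub>R w)) has_real_derivative f' w) (at s)"
proof -
  have "((\<lambda>s. y + s *\<^sub>R w) has_derivative (\<lambda>h. h *\<^sub>R w)) (at s)"
    by (auto intro!: derivative_eq_intros)
  from has_derivative_compose[OF this assms]
  have "((\<lambda>s. f (y + s *\<^sub>R w)) has_derivative (\<lambda>h. f' (h *\<^sub>R w))) (at s)" .
  moreover have "(\<lambda>h. f' (h *\<^sub>R w)) = (\<lambda>h. f' w * h)"
    using linear.scaleR[OF has_derivative_linear[OF assms]] by (auto simp: mult.commute)
  ultimately show ?thesis by (simp add: has_field_derivative_def)
qed

lemma frechet_derivative_eq_grad_inner: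
  fixes f :: "real^'n \<Rightarrow> real"
  assumes "f differentiable (at x)"
  shows "frechet_derivative f (at x) w = grad f x \<bullet> w"
proof -
  let ?D = "frechet_derivative f (at x)"
  have lin: "linear ?D" using assms frechet_derivative_works has_derivative_linear by blast
  have "?D w = ?D (\<Sum>i\<in>UNIV. w $ i *\<^sub>R axis i 1)"
    using basis_expansion[of w] by (simp add: scalar_mult_eq_scaleR)
  also have "\<dots> = grad f x \<bullet> w"
    by (simp add: linear_sum[OF lin] linear.scaleR[OF lin] grad_def inner_vec_def mult.commute)
  finally show ?thesis .
qed

lemma first_crossing:
  fixes \<phi> :: "real \<Rightarrow> real"
  assumes "a \<le> b" and cont: "continuous_on {a..b} \<phi>" and "\<phi> a < c" and "c \<le> \<phi> b"
  obtains t where "a < t" "t \<le> b" "c \<le> \<phi> t" "\<And>s. a \<le> s \<Longrightarrow> s < t \<Longrightarrow> \<phi> s < c"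
proof -
  define A where "A = {s \<in> {a..b}. c \<le> \<phi> s}"
  have "closed A"
    unfolding A_def by (intro continuous_on_closed_Collect_le cont continuous_on_const) auto
  moreover have "b \<in> A" "bdd_below A"
    using assms unfolding A_def by (auto intro: bdd_belowI[of _ a])
  ultimately have "Inf A \<in> A"
    using closed_contains_Inf by blast
  moreover have "\<phi> s < c" if "a \<le> s" "s < Inf A" for s
    using that cInf_lower[OF _ \<open>bdd_below A\<close>, of s] \<open>b \<in> A\<close> cInf_lower[OF \<open>b \<in> A\<close> \<open>bdd_below A\<close>]
    unfolding A_def by force
  moreover have "Inf A \<noteq> a"
    using \<open>Inf A \<in> A\<close> \<open>\<phi> a < c\<close> unfolding A_def by auto
  ultimately show ?thesis
    using that unfolding A_def by force
qed

lemma neg_derivative_le_of_drop_bound: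
  fixes \<phi> :: "real \<Rightarrow> real"
  assumes deriv: "(\<phi> has_real_derivative D) (at 0)" and "D < 0"
    and drop: "\<And>h. 0 < h \<Longrightarrow> \<phi> h < \<phi> 0 \<Longrightarrow> \<phi> 0 - \<phi> h \<le> L * h"
  shows "- D \<le> L"
proof -
  have "((\<lambda>h. (\<phi> h - \<phi> 0) / h) \<longlongrightarrow> D) (at_right 0)"
    using deriv by (auto simp: has_field_derivative_iff intro: tendsto_mono[OF at_within_le_at])
  from tendsto_minus[OF this]
  have quotient: "((\<lambda>h. (\<phi> 0 - \<phi> h) / h) \<longlongrightarrow> - D) (at_right 0)"
    by (simp add: minus_divide_left)
  have "0 < - D"
    using \<open>D < 0\<close> by simp
  have "\<forall>\<^sub>F h in at_right 0. (\<phi> 0 - \<phi> h) / h \<le> L"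
    using order_tendstoD(1)[OF quotient \<open>0 < - D\<close>] eventually_at_right_less[of "0::real"]
  proof eventually_elim
    case (elim h)
    then have "\<phi> h < \<phi> 0"
      by (simp add: zero_less_divide_iff)
    with drop[of h] elim show ?case
      by (simp add: divide_le_eq)
  qed
  with quotient show ?thesis
    by (rule tendsto_upperbound) simp
qed

lemma grad_quadratic_form_le_of_drop_bound:
  fixes f :: "real^'n \<Rightarrow> real" and S :: "real^'n^'n"
  assumes psd: "\<And>v. 0 \<le> v \<bullet> (S *v v)" and inv: "invertible S"
    and diff: "f differentiable (at x)" and "0 \<le> L"
    and drop: "\<And>y. f y < f x \<Longrightarrow> f x - f y \<le> L * normS S (x - y)"
  shows "sqrt (grad f x \<bullet> (S *v grad f x)) \<le> L"
proof -
  define g where "g = grad f x"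
  define a where "a = g \<bullet> (S *v g)"
  consider "a = 0" | "a > 0"
    using psd[of g] unfolding a_def by linarith
  then show ?thesis
  proof cases
    case 1
    then show ?thesis using \<open>0 \<le> L\<close> unfolding a_def g_def by simp
  next
    case 2
    text \<open>Descend from \<open>x\<close> in the direction \<open>- S g\<close>, along which \<open>f\<close> decreases at rate \<open>a\<close>
      while \<open>normS S\<close> grows at rate \<open>sqrt a\<close>.\<close>
    define \<phi> where "\<phi> h = f (x + h *\<^sub>R - (S *v g))" for h
    have "(f has_derivative frechet_derivative f (at x)) (at (x + 0 *\<^sub>R - (S *v g)))"
      using frechet_derivative_works[THEN iffD1, OF diff] by simp
    from has_real_derivative_along_line[OF this]
    have "(\<phi> has_real_derivative - a) (at 0)"
      using frechet_derivative_eq_grad_inner[OF diff]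
      unfolding \<phi>_def a_def g_def by (simp add: inner_commute)
    moreover have "\<phi> 0 - \<phi> h \<le> (L * sqrt a) * h" if "0 < h" "\<phi> h < \<phi> 0" for h
      using drop[of "x + h *\<^sub>R - (S *v g)"] that inv
      by (simp add: \<phi>_def normS_scaleR a_def mult.commute mult.left_commute)
    ultimately have "sqrt a * sqrt a \<le> sqrt a * L"
      using neg_derivative_le_of_drop_bound[of \<phi> "- a" "L * sqrt a"] \<open>a > 0\<close> by (simp add: mult.commute)
    moreover have "0 < sqrt a"
      using \<open>a > 0\<close> by simp
    ultimately show ?thesis
      unfolding a_def g_def by (rule mult_le_cancel_left_pos[THEN iffD1, rotated])
  qed
qed

lemma mean_value_grad_segment:
  fixes f :: "real^'n \<Rightarrow> real"
  assumes "0 < t" and cont: "continuous_on UNIV f"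
    and diff: "\<And>s. 0 \<le> s \<Longrightarrow> s < t \<Longrightarrow> f differentiable (at (y + s *\<^sub>R w))"
  obtains \<xi> where "0 < \<xi>" "\<xi> < t" "f (y + t *\<^sub>R w) - f y = t * (grad f (y + \<xi> *\<^sub>R w) \<bullet> w)"
proof -
  define \<phi> where "\<phi> s = f (y + s *\<^sub>R w)" for s
  have deriv: "(\<phi> has_real_derivative grad f (y + s *\<^sub>R w) \<bullet> w) (at s)" if "0 \<le> s" "s < t" for s
  proof -
    note d = diff[OF that]
    have "((\<lambda>s. f (y + s *\<^sub>R w)) has_real_derivative grad f (y + s *\<^sub>R w) \<bullet> w) (at s)"
      using has_real_derivative_along_line[OF frechet_derivative_works[THEN iffD1, OF d]]
      by (simp only: frechet_derivative_eq_grad_inner[OF d])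
    then show ?thesis
      unfolding \<phi>_def .
  qed
  have "continuous_on {0..t} \<phi>"
    unfolding \<phi>_def by (intro continuous_on_compose2[OF cont] continuous_intros) auto
  then have "\<exists>l \<xi>. 0 < \<xi> \<and> \<xi> < t \<and> (\<phi> has_real_derivative l) (at \<xi>) \<and> \<phi> t - \<phi> 0 = (t - 0) * l"
    by (rule MVT[OF \<open>0 < t\<close>]) (meson deriv less_imp_le real_differentiable_def)
  then obtain l \<xi> where \<xi>: "0 < \<xi>" "\<xi> < t" and "(\<phi> has_real_derivative l) (at \<xi>)"
    and mv: "\<phi> t - \<phi> 0 = t * l"
    by auto
  then have "l = grad f (y + \<xi> *\<^sub>R w) \<bullet> w"
    using deriv[of \<xi>] by (intro DERIV_unique) auto
  with \<xi> mv show ?thesis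
    using that[of \<xi>] unfolding \<phi>_def by simp
qed

lemma drop_bound_of_grad_quadratic_form_le:
  fixes f :: "real^'n \<Rightarrow> real" and S :: "real^'n^'n"
  assumes sym: "transpose S = S" and psd: "\<And>v. 0 \<le> v \<bullet> (S *v v)" and inv: "invertible S"
    and cont: "continuous_on UNIV f"
    and diff: "\<And>p. f p < f x \<Longrightarrow> f differentiable (at p)"
    and grad: "\<And>p. f p < f x \<Longrightarrow> sqrt (grad f p \<bullet> (S *v grad f p)) \<le> L"
    and "f y < f x"
  shows "f x - f y \<le> L * normS S (x - y)"
proof -
  define w where "w = x - y"
  have cont_segment: "continuous_on {0..1} (\<lambda>s. f (y + s *\<^sub>R w))"
    by (intro continuous_on_compose2[OF cont] continuous_intros) auto
  text \<open>Stop at the first point of the segment where \<open>f\<close> reaches \<open>f x\<close>, so that the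
    mean value point lies in the sublevel set where the gradient is controlled.\<close>
  obtain t where t: "0 < t" "t \<le> 1" "f x \<le> f (y + t *\<^sub>R w)"
    and below: "\<And>s. 0 \<le> s \<Longrightarrow> s < t \<Longrightarrow> f (y + s *\<^sub>R w) < f x"
    using first_crossing[OF _ cont_segment, of "f x"] \<open>f y < f x\<close> by (auto simp: w_def)
  obtain \<xi> where "0 < \<xi>" "\<xi> < t" and mv: "f (y + t *\<^sub>R w) - f y = t * (grad f (y + \<xi> *\<^sub>R w) \<bullet> w)"
    using mean_value_grad_segment[OF \<open>0 < t\<close> cont] diff below by blast
  define p where "p = y + \<xi> *\<^sub>R w"
  have "f p < f x"
    using below \<open>0 < \<xi>\<close> \<open>\<xi> < t\<close> unfolding p_def by simp
  have "f x - f y \<le> t * (grad f p \<bullet> w)"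
    using t mv unfolding p_def by simp
  also have "\<dots> \<le> t * \<bar>grad f p \<bullet> w\<bar>"
    using t by (simp add: mult_left_mono)
  also have "\<dots> \<le> \<bar>grad f p \<bullet> w\<bar>"
    using t by (simp add: mult_left_le_one_le)
  also have "\<dots> \<le> sqrt (grad f p \<bullet> (S *v grad f p)) * normS S w"
    unfolding normS_def by (rule abs_inner_le_psd_dual[OF sym psd inv])
  also have "\<dots> \<le> L * normS S w"
    using grad[OF \<open>f p < f x\<close>] psd_matrix_inv[OF psd inv]
    by (intro mult_right_mono) (auto simp: normS_def)
  finally show ?thesis
    unfolding w_def .
qed

lemma drop_bound_iff_grad_quadratic_form_le:
  fixes f :: "real^'n \<Rightarrow> real" and S :: "real^'n^'n" and \<rho> :: "real \<Rightarrow> real"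
  assumes sym: "transpose S = S" and psd: "\<And>v. 0 \<le> v \<bullet> (S *v v)" and inv: "invertible S"
    and cont: "continuous_on UNIV f" and nonneg: "\<And>x. 0 \<le> f x"
    and diff: "\<And>x. f x < T \<Longrightarrow> f differentiable (at x)"
    and mono: "mono_on {0..} \<rho>" and \<rho>_nonneg: "\<And>s. 0 \<le> s \<Longrightarrow> 0 \<le> \<rho> s"
  shows "(\<forall>x y. f y < f x \<and> f x < T \<longrightarrow> f x - f y \<le> \<rho> (f x) * normS S (x - y)) \<longleftrightarrow>
    (\<forall>x. f x < T \<longrightarrow> sqrt (grad f x \<bullet> (S *v grad f x)) \<le> \<rho> (f x))"
proof
  assume "\<forall>x y. f y < f x \<and> f x < T \<longrightarrow> f x - f y \<le> \<rho> (f x) * normS S (x - y)"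
  then show "\<forall>x. f x < T \<longrightarrow> sqrt (grad f x \<bullet> (S *v grad f x)) \<le> \<rho> (f x)"
    using diff nonneg \<rho>_nonneg by (auto intro!: grad_quadratic_form_le_of_drop_bound[OF psd inv])
next
  assume grad: "\<forall>x. f x < T \<longrightarrow> sqrt (grad f x \<bullet> (S *v grad f x)) \<le> \<rho> (f x)"
  show "\<forall>x y. f y < f x \<and> f x < T \<longrightarrow> f x - f y \<le> \<rho> (f x) * normS S (x - y)"
  proof (intro allI impI)
    fix x y assume xy: "f y < f x \<and> f x < T"
    have "sqrt (grad f p \<bullet> (S *v grad f p)) \<le> \<rho> (f x)" if "f p < f x" for p
    proof -
      have "sqrt (grad f p \<bullet> (S *v grad f p)) \<le> \<rho> (f p)"
        using grad xy that by auto
      also have "\<dots> \<le> \<rho> (f x)"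
        using mono_onD[OF mono, of "f p" "f x"] nonneg[of p] that by auto
      finally show ?thesis .
    qed
    then show "f x - f y \<le> \<rho> (f x) * normS S (x - y)"
      using diff xy by (intro drop_bound_of_grad_quadratic_form_le[OF sym psd inv cont]) auto
  qed
qed

lemma F_class_iff_drop_bound:
  fixes f :: "real^'n \<Rightarrow> real"
  defines "sd \<equiv> sqrt (det (cov f))"
  assumes "f \<in> F_d" and "continuous_on UNIV f" and "0 < \<Lambda>" and "0 < sd"
  shows "f \<in> F_class \<beta> \<Lambda> \<tau> \<longleftrightarrow>
    (\<forall>x y. f y < f x \<and> f x < \<tau> / sd \<longrightarrow>
       f x - f y \<le> \<Lambda> * (f x * sd) powr (1 - 1 / \<beta>) / sd * normS (cov f) (x - y))"
proof -
  have "(f x - f y) * sd / (\<Lambda> * (f x * sd) powr (1 - 1 / \<beta>)) \<le> normS (cov f) (x - y) \<longleftrightarrow>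
      f x - f y \<le> \<Lambda> * (f x * sd) powr (1 - 1 / \<beta>) / sd * normS (cov f) (x - y)"
    if "f y < f x" for x y
  proof -
    have "0 < f x"
      using that \<open>f \<in> F_d\<close> by (auto simp: F_d_def is_density_def intro: le_less_trans)
    then have "0 < \<Lambda> * (f x * sd) powr (1 - 1 / \<beta>)"
      using \<open>0 < \<Lambda>\<close> \<open>0 < sd\<close> by simp
    then show ?thesis
      using \<open>0 < sd\<close> by (simp add: divide_le_eq pos_le_divide_eq mult.commute mult.left_commute)
  qed
  then show ?thesis
    using assms(2,3) unfolding F_class_def sd_def by auto
qed

theorem proposition9:
  fixes f :: "real^'n \<Rightarrow> real" and \<tau>s \<beta> \<Lambda> \<tau> :: real
  assumes "\<tau>s > 0"
    and "f \<in> F_d"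
    and "continuous_on UNIV f"
    and "\<forall>x. f x < \<tau>s \<longrightarrow> f differentiable (at x)"
    and "\<beta> \<ge> 1" and "\<Lambda> > 0" and "\<tau> > 0"
    and "\<tau> \<le> \<tau>s * sqrt (det (cov f))"
  shows "f \<in> F_class \<beta> \<Lambda> \<tau> \<longleftrightarrow>
    (\<forall>x. f x < \<tau> / sqrt (det (cov f)) \<longrightarrow>
       normS' (matrix_inv (cov f)) (grad f x)
         \<le> \<Lambda> * (f x * sqrt (det (cov f))) powr (1 - 1 / \<beta>))"
proof -
  define sd where "sd = sqrt (det (cov f))"
  define \<rho> where "\<rho> s = \<Lambda> * (s * sd) powr (1 - 1 / \<beta>) / sd" for s
  have "0 < \<tau>s * sd"
    using assms(7,8) unfolding sd_def by linarith
  then have "0 < sd"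
    using assms(1) by (simp add: zero_less_mult_iff)
  then have inv: "invertible (cov f)"
    unfolding sd_def by (simp add: invertible_det_nz)
  have nonneg: "\<And>x. 0 \<le> f x"
    using assms(2) by (simp add: F_d_def is_density_def)
  have "\<tau> / sd \<le> \<tau>s"
    using assms(8) \<open>0 < sd\<close> unfolding sd_def by (simp add: divide_le_eq mult.commute)
  then have diff: "\<And>x. f x < \<tau> / sd \<Longrightarrow> f differentiable (at x)"
    using assms(4) by auto
  have "mono_on {0..} \<rho>" "\<And>s. 0 \<le> s \<Longrightarrow> 0 \<le> \<rho> s"
    using assms(5,6) \<open>0 < sd\<close> unfolding \<rho>_def
    by (auto intro!: mono_onI divide_right_mono mult_left_mono powr_mono2)
  from drop_bound_iff_grad_quadratic_form_le[OF cov_symmetric F_d_cov_psd[OF assms(2,3)] inv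
      assms(3) nonneg diff this]
  show ?thesis
    using F_class_iff_drop_bound[OF assms(2,3,6), of \<beta> \<tau>] \<open>0 < sd\<close>
    unfolding normS'_matrix_inv[OF inv] \<rho>_def sd_def
    by (simp add: pos_le_divide_eq)
qed

end
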